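(* In the setting of the context, let $\omega\in\mathcal{C}\setminus W_\Omega(T)$ and let $\epsilon_0$ be defined from $\omega$ as in the context. Then $\|T^{-1}(\omega)\|\le1/\epsilon_0$.
   Context: Let $\mathcal{H}$ be a Hilbert space, $A$ a selfadjoint (possibly unbounded) operator in $\mathcal{H}$ and $B$ a nonzero bounded selfadjoint operator. Let $c\ge0$, $d>0$, $\delta_\pm:=\pm\sqrt{c-d^2/4}-id/2$ (principal square root), $\mathcal{C}:=\mathbb{C}\setminus\{\delta_+,\delta_-\}$ and $T(\omega):=A-\omega^2-\frac{\omega^2}{c-id\omega-\omega^2}B$ with $\operatorname{dom}T(\omega)=\operatorname{dom}A$, $\omega\in\mathcal{C}$. $W(A),W(B)$ are numerical ranges. For real $\alpha,\beta$ let $p_{(\alpha,\beta)}(\omega):=(\alpha-\omega^2)(c-id\omega-\omega^2)-\beta\omega^2$ with roots $r_1,\dots,r_4$ labelled continuously in $(\alpha,\beta)$ and extended by limits to $\overline{\mathbb{R}}\times\mathbb{R}$ ($\overline{\mathbb{R}}=\mathbb{R}\cup\{\pm\infty\}$), values in $\overline{\mathbb{C}}$; $\Omega:=\overline{W(A)}\times\overline{W(B)}$ (closure in $\overline{\mathbb{R}}$), $W_\Omega(T):=\bigcup_n r_n(\Omega)$. For $\omega\in\mathcal{C}$ put $\kappa:=\frac{\omega^2}{c-id\omega-\omega^2}$, $\lambda:=\omega^2$ (subscripts $\Re,\Im$ denote real and imaginary parts). If $\kappa_\Re=0$, $\epsilon_0:=\sqrt{\min_{\beta\in W(B)}|\beta\kappa_\Im+\lambda_\Im|^2+\min_{\alpha\in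 W(A)}|\alpha-\lambda_\Re|^2}$. If $\kappa_\Re\neq0$: $\beta_{\inf},\beta_{\sup}$ are the values in $\overline{W(B)}$ closest to $-\frac{\kappa_\Im\lambda_\Im-\kappa_\Re(\inf W(A)-\lambda_\Re)}{|\kappa|^2}$ and $-\frac{\kappa_\Im\lambda_\Im-\kappa_\Re(\sup W(A)-\lambda_\Re)}{|\kappa|^2}$; $\mathcal{B}:=\left[\frac{\inf W(A)-\lambda_\Re}{\kappa_\Re},\frac{\sup W(A)-\lambda_\Re}{\kappa_\Re}\right]$; $\Omega':=\{(\inf W(A),\beta_{\inf}),(\sup W(A),\beta_{\sup})\}$ if $\mathcal{B}\cap\overline{W(B)}=\emptyset$, and otherwise $\Omega'$ additionally contains $(\alpha_{op},\beta_{op})$, where $\beta_{op}$ is the value in $\mathcal{B}\cap\overline{W(B)}$ closest to $-\lambda_\Im/\kappa_\Im$ (arbitrary if $\kappa_\Im=0$) and $\alpha_{op}:=\beta_{op}\kappa_\Re+\lambda_\Re$; then $\epsilon_0:=\min_{(\alpha,\beta)\in\Omega'}\sqrt{|\beta\kappa_\Im+\lambda_\Im|^2+|\alpha-\kappa_\Re\beta-\lambda_\Re|^2}$. *)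

theory Defs
  imports "HOL-Analysis.Analysis"
begin

text \<open>A complex Hilbert space is modelled as a real Banach space carrying a complex
structure J (multiplication by the imaginary unit) and a complex inner product ip,
linear in the first argument, conjugate symmetric, whose induced norm is the given norm.\<close>

definition scaleC :: "('a::real_vector \<Rightarrow> 'a) \<Rightarrow> complex \<Rightarrow> 'a \<Rightarrow> 'a" where
  "scaleC J a x = Re a *\<^sub>R x + Im a *\<^sub>R J x"

definition hilbert_space :: "('a::{real_normed_vector,complete_space} \<Rightarrow> 'a) \<Rightarrow> ('a \<Rightarrow> 'a \<Rightarrow> complex) \<Rightarrow> bool" where
  "hilbert_space J ip \<longleftrightarrow>
     linear J \<and> (\<forall>x. J (J x) = - x) \<and>
     (\<forall>x y z. ip (x + y) z = ip x z + ip y z) \<and>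
     (\<forall>r x y. ip (r *\<^sub>R x) y = complex_of_real r * ip x y) \<and>
     (\<forall>x y. ip (J x) y = \<i> * ip x y) \<and>
     (\<forall>x y. ip y x = cnj (ip x y)) \<and>
     (\<forall>x. ip x x = complex_of_real ((norm x)\<^sup>2))"

definition csubspace :: "('a::real_vector \<Rightarrow> 'a) \<Rightarrow> 'a set \<Rightarrow> bool" where
  "csubspace J D \<longleftrightarrow> subspace D \<and> (\<forall>x\<in>D. J x \<in> D)"

definition clinear_on :: "('a::real_vector \<Rightarrow> 'a) \<Rightarrow> 'a set \<Rightarrow> ('a \<Rightarrow> 'a) \<Rightarrow> bool" where
  "clinear_on J D A \<longleftrightarrow>
     (\<forall>x\<in>D. \<forall>y\<in>D. A (x + y) = A x + A y) \<and>
     (\<forall>r. \<forall>x\<in>D. A (r *\<^sub>R x) = r *\<^sub>R A x) \<and>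
     (\<forall>x\<in>D. A (J x) = J (A x))"

text \<open>Selfadjoint (possibly unbounded) operator A with domain D: densely defined,
linear, and equal to its adjoint (the adjoint's domain is the set of y for which
x \<mapsto> ip (A x) y is represented by some z, and A* y = z).\<close>
definition selfadjoint :: "('a::{real_normed_vector,complete_space} \<Rightarrow> 'a) \<Rightarrow> ('a \<Rightarrow> 'a \<Rightarrow> complex)
     \<Rightarrow> 'a set \<Rightarrow> ('a \<Rightarrow> 'a) \<Rightarrow> bool" where
  "selfadjoint J ip D A \<longleftrightarrow>
     csubspace J D \<and> closure D = UNIV \<and> clinear_on J D A \<and>
     (\<forall>y. y \<in> D \<longleftrightarrow> (\<exists>z. \<forall>x\<in>D. ip (A x) y = ip x z)) \<and>
     (\<forall>x\<in>D. \<forall>y\<in>D. ip (A x) y = ip x (A y))"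

definition bounded_selfadjoint :: "('a::{real_normed_vector,complete_space} \<Rightarrow> 'a) \<Rightarrow> ('a \<Rightarrow> 'a \<Rightarrow> complex)
     \<Rightarrow> ('a \<Rightarrow> 'a) \<Rightarrow> bool" where
  "bounded_selfadjoint J ip B \<longleftrightarrow>
     bounded_linear B \<and> (\<forall>x. B (J x) = J (B x)) \<and> (\<forall>x y. ip (B x) y = ip x (B y))"

definition numrange :: "('a::real_normed_vector \<Rightarrow> 'a \<Rightarrow> complex) \<Rightarrow> 'a set \<Rightarrow> ('a \<Rightarrow> 'a) \<Rightarrow> complex set" where
  "numrange ip D A = {ip (A x) x | x. x \<in> D \<and> norm x = 1}"

definition kappa :: "real \<Rightarrow> real \<Rightarrow> complex \<Rightarrow> complex" where
  "kappa c d \<omega> = \<omega>\<^sup>2 / (complex_of_real c - \<i> * complex_of_real d * \<omega> - \<omega>\<^sup>2)"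

definition Top :: "('a::real_vector \<Rightarrow> 'a) \<Rightarrow> real \<Rightarrow> real \<Rightarrow> ('a \<Rightarrow> 'a) \<Rightarrow> ('a \<Rightarrow> 'a) \<Rightarrow> complex \<Rightarrow> 'a \<Rightarrow> 'a" where
  "Top J c d A B \<omega> x = A x - scaleC J (\<omega>\<^sup>2) x - scaleC J (kappa c d \<omega>) (B x)"

definition delta_plus :: "real \<Rightarrow> real \<Rightarrow> complex" where
  "delta_plus c d = csqrt (complex_of_real (c - d\<^sup>2 / 4)) - \<i> * complex_of_real (d / 2)"

definition delta_minus :: "real \<Rightarrow> real \<Rightarrow> complex" where
  "delta_minus c d = - csqrt (complex_of_real (c - d\<^sup>2 / 4)) - \<i> * complex_of_real (d / 2)"

definition ppoly :: "real \<Rightarrow> real \<Rightarrow> real \<Rightarrow> real \<Rightarrow> complex \<Rightarrow> complex" where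
  "ppoly c d \<alpha> \<beta> \<omega> = (complex_of_real \<alpha> - \<omega>\<^sup>2) * (complex_of_real c - \<i> * complex_of_real d * \<omega> - \<omega>\<^sup>2)
                       - complex_of_real \<beta> * \<omega>\<^sup>2"

text \<open>Finite part of the enclosure W_Omega(T): the roots of p_(alpha,beta) for
(alpha,beta) in closure W(A) x closure W(B) (finite alpha), together with the limit
roots delta_+, delta_- that arise at alpha = +-infinity when W(A) is unbounded.
(The point infinity of the extended plane is not a complex number and is omitted.)\<close>
definition W_Omega :: "real \<Rightarrow> real \<Rightarrow> real set \<Rightarrow> real set \<Rightarrow> complex set" where
  "W_Omega c d WA WB =
     {\<omega>. \<exists>\<alpha>\<in>closure WA. \<exists>\<beta>\<in>closure WB. ppoly c d \<alpha> \<beta> \<omega> = 0}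
     \<union> (if bounded WA then {} else {delta_plus c d, delta_minus c d})"

definition closest :: "real set \<Rightarrow> real \<Rightarrow> real" where
  "closest S t = (SOME b. b \<in> S \<and> (\<forall>b'\<in>S. \<bar>b - t\<bar> \<le> \<bar>b' - t\<bar>))"

text \<open>WA, WB are the (real) numerical ranges of A and B. Points of Omega' whose first
coordinate is inf W(A) = -infinity or sup W(A) = +infinity contribute the value
+infinity to the minimum and are therefore omitted.\<close>
definition eps0 :: "real \<Rightarrow> real \<Rightarrow> real set \<Rightarrow> real set \<Rightarrow> complex \<Rightarrow> real" where
  "eps0 c d WA WB \<omega> =
    (let lam = \<omega>\<^sup>2; \<kappa> = kappa c d \<omega>;
         lR = Re lam; lI = Im lam; kR = Re \<kappa>; kI = Im \<kappa>
     in if kR = 0 then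
          sqrt ((INF \<beta>\<in>WB. (\<beta> * kI + lI)\<^sup>2) + (INF \<alpha>\<in>WA. (\<alpha> - lR)\<^sup>2))
        else
          (let Bs = {\<beta>. (bdd_below WA \<longrightarrow> Inf WA \<le> kR * \<beta> + lR) \<and>
                        (bdd_above WA \<longrightarrow> kR * \<beta> + lR \<le> Sup WA)};
               binf = closest (closure WB) (- (kI * lI - kR * (Inf WA - lR)) / (cmod \<kappa>)\<^sup>2);
               bsup = closest (closure WB) (- (kI * lI - kR * (Sup WA - lR)) / (cmod \<kappa>)\<^sup>2);
               bop = closest (Bs \<inter> closure WB) (- lI / kI);
               Om' = (if bdd_below WA then {(Inf WA, binf)} else {})
                   \<union> (if bdd_above WA then {(Sup WA, bsup)} else {})
                   \<union> (if Bs \<inter> closure WB = {} then {} else {(bop * kR + lR, bop)})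
           in INF p\<in>Om'. sqrt ((snd p * kI + lI)\<^sup>2 + (fst p - kR * snd p - lR)\<^sup>2)))"

end

theory Submission
  imports Defs
begin

text \<open>For a unit vector \<open>u \<in> dom A\<close>, \<open>\<langle>T(\<omega>) u, u\<rangle> = \<alpha> - \<lambda> - \<kappa> \<beta>\<close> with \<open>\<alpha> = \<langle>A u, u\<rangle> \<in> W(A)\<close> and
  \<open>\<beta> = \<langle>B u, u\<rangle> \<in> W(B)\<close>. For fixed \<open>\<alpha>\<close> the modulus \<open>\<bar>\<alpha> - \<lambda> - \<kappa> \<beta>\<bar>\<close> is minimised over
  \<open>\<beta> \<in> W(B)\<close> at a nearest point, so the infimum over \<open>W(A) \<times> W(B)\<close> is bounded below by the
  finite minimum \<open>\<epsilon>\<^sub>0\<close> over \<open>\<Omega>'\<close>; and \<open>\<epsilon>\<^sub>0 > 0\<close> because a zero of \<open>\<alpha> - \<lambda> - \<kappa> \<beta>\<close> on the closure is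
  a root of \<open>p\<^sub>(\<^sub>\<alpha>\<^sub>,\<^sub>\<beta>\<^sub>)\<close>, i.e. a point of \<open>W\<^sub>\<Omega>(T)\<close>. Hence \<open>\<bar>\<langle>T(\<omega>) x, x\<rangle>\<bar> \<ge> \<epsilon>\<^sub>0 \<parallel>x\<parallel>\<^sup>2\<close>.
  Such a coercive bounded perturbation of a selfadjoint operator is bijective with
  \<open>\<parallel>T(\<omega>)\<^sup>-\<^sup>1\<parallel> \<le> 1/\<epsilon>\<^sub>0\<close>: the lower bound gives injectivity and a closed range, and a vector
  orthogonal to the range lies in \<open>dom A\<^sup>* = dom A\<close>, where coercivity forces it to vanish.\<close>

lemma closest_nearest:
  fixes S :: "real set"
  assumes "closed S" "S \<noteq> {}"
  shows "closest S t \<in> S \<and> (\<forall>b\<in>S. \<bar>closest S t - t\<bar> \<le> \<bar>b - t\<bar>)"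
proof -
  obtain x where "x \<in> S" "\<And>y. y \<in> S \<Longrightarrow> dist t x \<le> dist t y"
    using distance_attains_inf[OF assms] by blast
  then have "\<exists>b. b \<in> S \<and> (\<forall>b'\<in>S. \<bar>b - t\<bar> \<le> \<bar>b' - t\<bar>)"
    by (auto simp: dist_real_def abs_minus_commute)
  then show ?thesis unfolding closest_def by (rule someI_ex)
qed

lemma mem_closure_interval_if_between:
  fixes S :: "real set"
  assumes S: "S \<noteq> {}" "is_interval S"
    and lower: "bdd_below S \<Longrightarrow> Inf S \<le> a" and upper: "bdd_above S \<Longrightarrow> a \<le> Sup S"
  shows "a \<in> closure S"
proof -
  obtain lo where lo: "lo \<in> closure S" "lo \<le> a"
  proof (cases "bdd_below S")
    case True
    then show ?thesis using that closure_contains_Inf[OF S(1) True] lower by blast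
  next
    case False
    then obtain x where "x \<in> S" "x < a" unfolding bdd_below_def by (auto simp: not_le)
    then show ?thesis using that closure_subset by force
  qed
  obtain hi where hi: "hi \<in> closure S" "a \<le> hi"
  proof (cases "bdd_above S")
    case True
    then show ?thesis using that closure_contains_Sup[OF S(1) True] upper by blast
  next
    case False
    then obtain x where "x \<in> S" "a < x" unfolding bdd_above_def by (auto simp: not_le)
    then show ?thesis using that closure_subset by force
  qed
  have "is_interval (closure S)"
    using S(2) by (simp add: is_interval_connected_1 connected_imp_connected_closure)
  then show ?thesis using lo hi unfolding is_interval_1 by blast
qed

lemma convex_combination_unit_vectors_nonzero:
  fixes x y :: "'a::real_normed_vector"
  assumes "norm x = 1" "norm y = 1" "y \<noteq> - x" "0 \<le> s" "s \<le> 1"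
  shows "(1 - s) *\<^sub>R x + s *\<^sub>R y \<noteq> 0"
proof
  assume "(1 - s) *\<^sub>R x + s *\<^sub>R y = 0"
  then have sy: "s *\<^sub>R y = - ((1 - s) *\<^sub>R x)" by (simp add: eq_neg_iff_add_eq_0 add.commute)
  then have "\<bar>s\<bar> = \<bar>1 - s\<bar>" using assms(1,2) by (metis norm_minus_cancel norm_scaleR mult_1_right)
  then have "s \<noteq> 0" "s *\<^sub>R y = s *\<^sub>R (- x)" using sy assms(4,5) by auto
  then show False using assms(3) by (metis scaleR_cancel_left scaleR_minus_right)
qed

lemma INF_affine_square_eq_0_imp:
  fixes S :: "real set"
  assumes S: "S \<noteq> {}" and inf: "(INF x\<in>S. (x * a + b)\<^sup>2) = 0"
  shows "\<exists>x\<in>closure S. x * a + b = 0"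
proof (cases "a = 0")
  case True
  then have "b = 0" using S inf by simp
  moreover obtain x where "x \<in> S" using S by blast
  ultimately show ?thesis using True closure_subset by (intro bexI[of _ x]) auto
next
  case False
  have bdd: "bdd_below ((\<lambda>x. (x * a + b)\<^sup>2) ` S)" by (auto intro: bdd_belowI[of _ 0])
  have "- b / a \<in> closure S"
    unfolding closure_approachable
  proof (intro allI impI)
    fix e :: real assume e: "e > 0"
    then have "(INF x\<in>S. (x * a + b)\<^sup>2) < (e * \<bar>a\<bar>)\<^sup>2" using inf False by simp
    then obtain x where x: "x \<in> S" "(x * a + b)\<^sup>2 < (e * \<bar>a\<bar>)\<^sup>2"
      using cINF_less_iff[OF S bdd] by blast
    then have "\<bar>x * a + b\<bar> < e * \<bar>a\<bar>"
      using power2_less_imp_less[of "\<bar>x * a + b\<bar>" "e * \<bar>a\<bar>"] e by simp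
    moreover have "x * a + b = a * (x - - b / a)" using False by (simp add: field_simps)
    ultimately have "\<bar>a\<bar> * \<bar>x - - b / a\<bar> < \<bar>a\<bar> * e" by (simp add: abs_mult mult.commute)
    then show "\<exists>y\<in>S. dist y (- b / a) < e"
      using x(1) False by (auto simp: dist_real_def)
  qed
  then show ?thesis using False by (intro bexI[of _ "- b / a"]) simp_all
qed

lemma eq_0_if_le_quadratic:
  fixes p q :: real
  assumes q: "q \<ge> 0" and le: "\<And>t. 2 * t * p \<le> t\<^sup>2 * q"
  shows "p = 0"
proof (rule ccontr)
  assume "p \<noteq> 0"
  define s where "s = 1 / (q + 1)"
  have s: "s > 0" "s * q < 1" using q unfolding s_def by (simp_all add: field_simps)
  have "(s * p\<^sup>2) * 2 \<le> (s * p\<^sup>2) * (s * q)"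
    using le[of "s * p"] by (simp add: power2_eq_square algebra_simps)
  then have "2 \<le> s * q" using s(1) \<open>p \<noteq> 0\<close> by (simp add: mult_le_cancel_left_pos)
  then show False using s(2) by simp
qed

lemma Cauchy_if_dist_le:
  fixes g :: "nat \<Rightarrow> 'a::metric_space"
  assumes dist: "\<And>m n. dist (g m) (g n) \<le> h m + h n" and h: "h \<longlonglongrightarrow> 0"
  shows "Cauchy g"
proof (rule metric_CauchyI)
  fix r :: real assume "r > 0"
  then obtain N where N: "\<And>n. n \<ge> N \<Longrightarrow> \<bar>h n\<bar> < r / 2"
    using h unfolding LIMSEQ_iff by (metis half_gt_zero real_norm_def diff_zero)
  show "\<exists>M. \<forall>m\<ge>M. \<forall>n\<ge>M. dist (g m) (g n) < r"
  proof (intro exI allI impI)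
    fix m n assume "m \<ge> N" "n \<ge> N"
    then show "dist (g m) (g n) < r" using dist[of m n] N[of m] N[of n] by linarith
  qed
qed

section \<open>The constant \<open>\<epsilon>\<^sub>0\<close>\<close>

lemma cmod_residual:
  "cmod (of_real \<alpha> - lam - kap * of_real \<beta>)
   = sqrt ((\<beta> * Im kap + Im lam)\<^sup>2 + (\<alpha> - Re kap * \<beta> - Re lam)\<^sup>2)"
  unfolding cmod_def by (simp add: power2_eq_square algebra_simps)

lemma cmod_residual_le_of_abs_le:
  assumes "\<bar>a - Re kap * \<beta> - Re lam\<bar> \<le> \<bar>\<alpha> - Re kap * \<beta> - Re lam\<bar>"
  shows "cmod (of_real a - lam - kap * of_real \<beta>) \<le> cmod (of_real \<alpha> - lam - kap * of_real \<beta>)"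
  unfolding cmod_residual using assms by (simp add: abs_le_square_iff)

text \<open>For fixed \<open>a\<close>, \<open>\<bar>a - \<lambda> - \<kappa>\<beta>\<bar> = \<bar>\<kappa>\<bar> \<bar>(a - \<lambda>)/\<kappa> - \<beta>\<bar>\<close>, so over real \<open>\<beta>\<close> it is
  minimised by the point of \<open>X\<close> closest to \<open>Re ((a - \<lambda>)/\<kappa>)\<close>.\<close>
lemma cmod_residual_closest_le:
  assumes "kap \<noteq> 0" "closed X" "\<beta> \<in> X"
  shows "cmod (of_real a - lam - kap * of_real (closest X (Re ((of_real a - lam) / kap))))
         \<le> cmod (of_real a - lam - kap * of_real \<beta>)"
proof -
  define v where "v = (of_real a - lam) / kap"
  have factor: "cmod (of_real a - lam - kap * of_real b) = cmod kap * sqrt ((b - Re v)\<^sup>2 + (Im v)\<^sup>2)"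
    for b
  proof -
    have "of_real a - lam - kap * of_real b = kap * (v - of_real b)"
      using assms(1) unfolding v_def by (simp add: field_simps)
    then have "cmod (of_real a - lam - kap * of_real b) = cmod kap * cmod (v - of_real b)"
      by (simp add: norm_mult)
    also have "cmod (v - of_real b) = sqrt ((b - Re v)\<^sup>2 + (Im v)\<^sup>2)"
      by (simp add: cmod_def power2_commute)
    finally show ?thesis .
  qed
  have "\<bar>closest X (Re v) - Re v\<bar> \<le> \<bar>\<beta> - Re v\<bar>"
    using closest_nearest[OF assms(2)] assms(3) by blast
  then have "(closest X (Re v) - Re v)\<^sup>2 \<le> (\<beta> - Re v)\<^sup>2"
    by (simp add: abs_le_square_iff)
  then show ?thesis
    unfolding v_def[symmetric] factor by (intro mult_left_mono) simp_all
qed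

text \<open>The parameter interval \<open>\<B>\<close> of the paper, written so that it also covers unbounded
  \<open>W(A)\<close> and either sign of \<open>\<kappa>\<^sub>\<Re>\<close>.\<close>
definition beta_interval :: "real set \<Rightarrow> complex \<Rightarrow> complex \<Rightarrow> real set" where
  "beta_interval WA lam kap =
     {\<beta>. (bdd_below WA \<longrightarrow> Inf WA \<le> Re kap * \<beta> + Re lam) \<and>
         (bdd_above WA \<longrightarrow> Re kap * \<beta> + Re lam \<le> Sup WA)}"

text \<open>The set \<open>\<Omega>'\<close> of the paper for \<open>\<lambda> = \<omega>\<^sup>2\<close>, \<open>\<kappa> = \<kappa>(\<omega>)\<close>; the targets of \<open>\<beta>\<^sub>i\<^sub>n\<^sub>f\<close> and
  \<open>\<beta>\<^sub>s\<^sub>u\<^sub>p\<close> are written as \<open>Re ((\<alpha> - \<lambda>)/\<kappa>)\<close> (see \<open>eps0_eq_eps_bound\<close>).\<close>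
definition Omega' :: "real set \<Rightarrow> real set \<Rightarrow> complex \<Rightarrow> complex \<Rightarrow> (real \<times> real) set" where
  "Omega' WA WB lam kap =
     (if bdd_below WA
      then {(Inf WA, closest (closure WB) (Re ((of_real (Inf WA) - lam) / kap)))} else {})
     \<union> (if bdd_above WA
        then {(Sup WA, closest (closure WB) (Re ((of_real (Sup WA) - lam) / kap)))} else {})
     \<union> (if beta_interval WA lam kap \<inter> closure WB = {} then {}
        else let b = closest (beta_interval WA lam kap \<inter> closure WB) (- Im lam / Im kap)
             in {(Re kap * b + Re lam, b)})"

definition eps_bound :: "real set \<Rightarrow> real set \<Rightarrow> complex \<Rightarrow> complex \<Rightarrow> real" where
  "eps_bound WA WB lam kap =
     (if Re kap = 0
      then sqrt ((INF \<beta>\<in>WB. (\<beta> * Im kap + Im lam)\<^sup>2) + (INF \<alpha>\<in>WA. (\<alpha> - Re lam)\<^sup>2))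
      else INF p\<in>Omega' WA WB lam kap. cmod (of_real (fst p) - lam - kap * of_real (snd p)))"

lemma eps0_eq_eps_bound: "eps0 c d WA WB \<omega> = eps_bound WA WB (\<omega>\<^sup>2) (kappa c d \<omega>)"
proof -
  have "Re ((of_real a - \<omega>\<^sup>2) / kappa c d \<omega>)
        = - (Im (kappa c d \<omega>) * Im (\<omega>\<^sup>2) - Re (kappa c d \<omega>) * (a - Re (\<omega>\<^sup>2)))
          / (cmod (kappa c d \<omega>))\<^sup>2" for a
    by (simp add: Re_divide' algebra_simps)
  then show ?thesis
    unfolding eps0_def eps_bound_def Omega'_def beta_interval_def Let_def cmod_residual
    by (simp add: mult.commute)
qed

lemma finite_Omega': "finite (Omega' WA WB lam kap)"
  by (simp add: Omega'_def Let_def)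

lemma closed_beta_interval: "closed (beta_interval WA lam kap)"
  unfolding beta_interval_def
  by (intro closed_Collect_conj closed_Collect_imp) (auto intro!: closed_Collect_le continuous_intros)

lemma Omega'_interior_le:
  assumes \<beta>: "\<beta> \<in> beta_interval WA lam kap \<inter> closure WB"
  shows "\<exists>p\<in>Omega' WA WB lam kap.
           cmod (of_real (fst p) - lam - kap * of_real (snd p)) \<le> \<bar>\<beta> * Im kap + Im lam\<bar>"
proof -
  define Bs where "Bs = beta_interval WA lam kap \<inter> closure WB"
  define b where "b = closest Bs (- Im lam / Im kap)"
  have ne: "Bs \<noteq> {}" using \<beta> unfolding Bs_def by blast
  have "closed Bs" unfolding Bs_def using closed_beta_interval by blast
  then have "\<bar>b - - Im lam / Im kap\<bar> \<le> \<bar>\<beta> - - Im lam / Im kap\<bar>"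
    using closest_nearest[OF _ ne] \<beta> unfolding b_def Bs_def by blast
  then have "\<bar>b * Im kap + Im lam\<bar> \<le> \<bar>\<beta> * Im kap + Im lam\<bar>"
    by (cases "Im kap = 0") (auto simp: field_simps abs_mult abs_divide mult_right_mono)
  then have "cmod (of_real (Re kap * b + Re lam) - lam - kap * of_real b) \<le> \<bar>\<beta> * Im kap + Im lam\<bar>"
    unfolding cmod_residual by (simp add: algebra_simps)
  then show ?thesis using ne unfolding Omega'_def Bs_def b_def Let_def by auto
qed

lemma Omega'_residual_le:
  assumes kap: "Re kap \<noteq> 0" and \<alpha>: "\<alpha> \<in> WA" and \<beta>: "\<beta> \<in> WB"
  shows "\<exists>p\<in>Omega' WA WB lam kap.
           cmod (of_real (fst p) - lam - kap * of_real (snd p)) \<le> cmod (of_real \<alpha> - lam - kap * of_real \<beta>)"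
proof (cases "\<beta> \<in> beta_interval WA lam kap")
  case True
  have "\<bar>\<beta> * Im kap + Im lam\<bar> = \<bar>Im (of_real \<alpha> - lam - kap * of_real \<beta>)\<bar>"
    by (simp add: algebra_simps)
  also have "\<dots> \<le> cmod (of_real \<alpha> - lam - kap * of_real \<beta>)" by (rule abs_Im_le_cmod)
  finally show ?thesis
    using Omega'_interior_le[of \<beta> WA lam kap WB] True \<beta> closure_subset by force
next
  case False
  have \<beta>': "\<beta> \<in> closure WB" using \<beta> closure_subset by blast
  have kap0: "kap \<noteq> 0" using kap by auto
  from False consider "bdd_below WA" "Re kap * \<beta> + Re lam < Inf WA"
    | "bdd_above WA" "Sup WA < Re kap * \<beta> + Re lam"
    unfolding beta_interval_def by force
  then show ?thesis
  proof cases
    case 1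
    have "Inf WA \<le> \<alpha>" using cInf_lower[OF \<alpha> 1(1)] .
    then have "cmod (of_real (Inf WA) - lam - kap * of_real \<beta>) \<le> cmod (of_real \<alpha> - lam - kap * of_real \<beta>)"
      using 1(2) by (intro cmod_residual_le_of_abs_le) simp
    then show ?thesis
      using 1(1) cmod_residual_closest_le[OF kap0 closed_closure \<beta>', of "Inf WA" lam]
      unfolding Omega'_def by force
  next
    case 2
    have "\<alpha> \<le> Sup WA" using cSup_upper[OF \<alpha> 2(1)] .
    then have "cmod (of_real (Sup WA) - lam - kap * of_real \<beta>) \<le> cmod (of_real \<alpha> - lam - kap * of_real \<beta>)"
      using 2(2) by (intro cmod_residual_le_of_abs_le) simp
    then show ?thesis
      using 2(1) cmod_residual_closest_le[OF kap0 closed_closure \<beta>', of "Sup WA" lam]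
      unfolding Omega'_def by force
  qed
qed

lemma eps_bound_le:
  assumes "\<alpha> \<in> WA" "\<beta> \<in> WB"
  shows "eps_bound WA WB lam kap \<le> cmod (of_real \<alpha> - lam - kap * of_real \<beta>)"
proof (cases "Re kap = 0")
  case True
  have "(INF \<beta>\<in>WB. (\<beta> * Im kap + Im lam)\<^sup>2) \<le> (\<beta> * Im kap + Im lam)\<^sup>2"
    by (rule cINF_lower[OF _ assms(2)]) (auto intro: bdd_belowI[of _ 0])
  moreover have "(INF \<alpha>\<in>WA. (\<alpha> - Re lam)\<^sup>2) \<le> (\<alpha> - Re lam)\<^sup>2"
    by (rule cINF_lower[OF _ assms(1)]) (auto intro: bdd_belowI[of _ 0])
  ultimately show ?thesis using True by (simp add: eps_bound_def cmod_residual)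
next
  case False
  then show ?thesis
    using Omega'_residual_le[OF False assms, of lam] finite_Omega'
    unfolding eps_bound_def by (auto intro: cINF_lower2 bdd_below_finite)
qed

lemma Omega'_subset:
  assumes WA: "WA \<noteq> {}" "is_interval WA" and WB: "WB \<noteq> {}"
  shows "Omega' WA WB lam kap \<subseteq> closure WA \<times> closure WB"
proof -
  define Bs where "Bs = beta_interval WA lam kap \<inter> closure WB"
  define b where "b = closest Bs (- Im lam / Im kap)"
  have cWB: "closed (closure WB)" "closure WB \<noteq> {}" using WB by auto
  have "Re kap * b + Re lam \<in> closure WA \<and> b \<in> closure WB" if ne: "Bs \<noteq> {}"
  proof -
    have "closed Bs" unfolding Bs_def using closed_beta_interval by blast
    then have "b \<in> beta_interval WA lam kap" "b \<in> closure WB"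
      using closest_nearest[OF _ ne] unfolding b_def Bs_def by auto
    then show ?thesis
      using mem_closure_interval_if_between[OF WA] unfolding beta_interval_def by auto
  qed
  then show ?thesis
    using closure_contains_Inf[OF WA(1)] closure_contains_Sup[OF WA(1)] closest_nearest[OF cWB]
    unfolding Omega'_def Let_def Bs_def b_def by auto
qed

lemma Omega'_nonempty:
  assumes "WB \<noteq> {}"
  shows "Omega' WA WB lam kap \<noteq> {}"
proof -
  have "beta_interval WA lam kap = UNIV" if "\<not> bdd_below WA" "\<not> bdd_above WA"
    using that unfolding beta_interval_def by simp
  then show ?thesis using assms unfolding Omega'_def Let_def by auto
qed

lemma eps_bound_pos:
  assumes WA: "WA \<noteq> {}" "is_interval WA" and WB: "WB \<noteq> {}"
    and nz: "\<And>\<alpha> \<beta>. \<alpha> \<in> closure WA \<Longrightarrow> \<beta> \<in> closure WB \<Longrightarrow> of_real \<alpha> - lam - kap * of_real \<beta> \<noteq> 0"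
  shows "eps_bound WA WB lam kap > 0"
proof (cases "Re kap = 0")
  case True
  define IB where "IB = (INF \<beta>\<in>WB. (\<beta> * Im kap + Im lam)\<^sup>2)"
  define IA where "IA = (INF \<alpha>\<in>WA. (\<alpha> - Re lam)\<^sup>2)"
  have "IB \<ge> 0" "IA \<ge> 0" unfolding IB_def IA_def using WA WB by (auto intro: cINF_greatest)
  moreover have "IB + IA \<noteq> 0"
  proof
    assume "IB + IA = 0"
    with \<open>IB \<ge> 0\<close> \<open>IA \<ge> 0\<close> have "IB = 0" "IA = 0" by auto
    have "Re lam \<in> closure WA"
      using INF_affine_square_eq_0_imp[OF WA(1), of 1 "- Re lam"] \<open>IA = 0\<close> unfolding IA_def by auto
    moreover obtain \<beta> where "\<beta> \<in> closure WB" "\<beta> * Im kap + Im lam = 0"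
      using INF_affine_square_eq_0_imp[OF WB] \<open>IB = 0\<close> unfolding IB_def by blast
    moreover have "of_real (Re lam) - lam - kap * of_real \<beta> = 0"
      using True \<open>\<beta> * Im kap + Im lam = 0\<close> by (simp add: complex_eq_iff algebra_simps)
    ultimately show False using nz by blast
  qed
  ultimately show ?thesis using True unfolding eps_bound_def IA_def IB_def by simp
next
  case False
  have "cmod (of_real (fst p) - lam - kap * of_real (snd p)) > 0" if "p \<in> Omega' WA WB lam kap" for p
  proof -
    have "fst p \<in> closure WA" "snd p \<in> closure WB"
      using subsetD[OF Omega'_subset[OF WA WB] that] by (simp_all add: mem_Times_iff)
    then show ?thesis using nz by simp
  qed
  then show ?thesis
    using False finite_Omega' Omega'_nonempty[OF WB] unfolding eps_bound_def
    by (simp add: finite_less_Inf_iff)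
qed

section \<open>Complex Hilbert spaces\<close>

lemma numrange_nonempty:
  assumes "subspace D" "D \<noteq> {0}"
  shows "numrange ip D A \<noteq> {}"
proof -
  obtain x where "x \<in> D" "x \<noteq> 0" using assms subspace_0 by auto
  then have "(1 / norm x) *\<^sub>R x \<in> D" "norm ((1 / norm x) *\<^sub>R x) = 1"
    using assms(1) by (simp_all add: subspace_scale)
  then show ?thesis unfolding numrange_def by blast
qed

locale hilbert =
  fixes J :: "'a::{real_normed_vector,complete_space} \<Rightarrow> 'a" and ip :: "'a \<Rightarrow> 'a \<Rightarrow> complex"
  assumes hilbert_space: "hilbert_space J ip"
begin

lemma linear_J: "linear J"
  and ip_add_left: "ip (x + y) z = ip x z + ip y z"
  and ip_scaleR_left: "ip (r *\<^sub>R x) y = complex_of_real r * ip x y"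
  and ip_J_left: "ip (J x) y = \<i> * ip x y"
  and ip_commute_cnj: "ip y x = cnj (ip x y)"
  and ip_self: "ip x x = complex_of_real ((norm x)\<^sup>2)"
  using hilbert_space unfolding hilbert_space_def by blast+

lemma ip_zero_left [simp]: "ip 0 y = 0"
  using ip_scaleR_left[of 0 0 y] by simp

lemma ip_minus_left: "ip (- x) y = - ip x y"
  using ip_scaleR_left[of "-1" x y] by simp

lemma ip_diff_left: "ip (x - y) z = ip x z - ip y z"
  using ip_add_left[of x "- y" z] by (simp add: ip_minus_left)

lemma ip_add_right: "ip x (y + z) = ip x y + ip x z"
  by (metis ip_commute_cnj ip_add_left complex_cnj_add)

lemma ip_scaleR_right: "ip x (r *\<^sub>R y) = complex_of_real r * ip x y"
  by (metis ip_commute_cnj ip_scaleR_left complex_cnj_mult complex_cnj_complex_of_real)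

lemma ip_J_right: "ip x (J y) = - \<i> * ip x y"
  by (metis ip_commute_cnj ip_J_left complex_cnj_mult complex_cnj_i)

lemma ip_zero_right [simp]: "ip x 0 = 0"
  using ip_scaleR_right[of x 0 0] by simp

lemma ip_minus_right: "ip x (- y) = - ip x y"
  using ip_scaleR_right[of x "-1" y] by simp

lemma ip_diff_right: "ip x (y - z) = ip x y - ip x z"
  using ip_add_right[of x y "- z"] by (simp add: ip_minus_right)

lemma ip_scaleC_left: "ip (scaleC J a x) y = a * ip x y"
  unfolding scaleC_def ip_add_left ip_scaleR_left ip_J_left
  by (simp add: complex_eq_iff algebra_simps)

lemma ip_scaleC_right: "ip x (scaleC J a y) = cnj a * ip x y"
  by (metis ip_commute_cnj ip_scaleC_left complex_cnj_mult)

lemma Re_ip_self: "Re (ip x x) = (norm x)\<^sup>2"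
  by (simp add: ip_self)

lemma ip_self_real_if_symmetric:
  assumes "ip (A x) x = ip x (A x)"
  shows "ip (A x) x = complex_of_real (Re (ip (A x) x))"
proof -
  have "ip (A x) x = cnj (ip (A x) x)" using assms ip_commute_cnj[of x "A x"] by simp
  then have "Im (ip (A x) x) = Im (cnj (ip (A x) x))" by (rule arg_cong)
  then have "Im (ip (A x) x) = 0" by simp
  then show ?thesis by (simp add: complex_eq_iff)
qed

lemma norm_scaleC: "norm (scaleC J a x) = cmod a * norm x"
proof -
  have "ip (scaleC J a x) (scaleC J a x) = (a * cnj a) * ip x x"
    unfolding ip_scaleC_left ip_scaleC_right by (simp add: algebra_simps)
  then have "(norm (scaleC J a x))\<^sup>2 = (cmod a * norm x)\<^sup>2"
    using Re_ip_self[of "scaleC J a x"] Re_ip_self[of x]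
    by (simp add: ip_self complex_mult_cnj cmod_power2 power_mult_distrib)
  then show ?thesis by (simp add: power2_eq_iff_nonneg)
qed

lemma norm_J: "norm (J x) = norm x"
  using norm_scaleC[of \<i> x] by (simp add: scaleC_def)

lemma norm_add_square: "(norm (x + y))\<^sup>2 = (norm x)\<^sup>2 + 2 * Re (ip x y) + (norm y)\<^sup>2"
proof -
  have "Re (ip y x) = Re (ip x y)" using ip_commute_cnj[of y x] by simp
  then show ?thesis
    using Re_ip_self[of "x + y"] unfolding ip_add_left ip_add_right by (simp add: Re_ip_self)
qed

lemma norm_diff_square: "(norm (x - y))\<^sup>2 = (norm x)\<^sup>2 - 2 * Re (ip x y) + (norm y)\<^sup>2"
  using norm_add_square[of x "- y"] by (simp add: ip_minus_right)

lemma Re_ip_le: "Re (ip x y) \<le> norm x * norm y"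
proof (cases "x = 0 \<or> y = 0")
  case True
  then show ?thesis by auto
next
  case False
  then have pos: "norm x * norm y > 0" by simp
  have "0 \<le> (norm (norm y *\<^sub>R x - norm x *\<^sub>R y))\<^sup>2" by simp
  also have "\<dots> = 2 * (norm x * norm y) * (norm x * norm y - Re (ip x y))"
    unfolding norm_diff_square ip_scaleR_left ip_scaleR_right
    by (simp add: power_mult_distrib power2_eq_square algebra_simps)
  finally show ?thesis using pos by (simp add: zero_le_mult_iff)
qed

lemma norm_ip_le: "cmod (ip x y) \<le> norm x * norm y"
proof (cases "ip x y = 0")
  case True
  then show ?thesis by simp
next
  case False
  define u where "u = cnj (ip x y) / cmod (ip x y)"
  have "cmod u = 1" using False unfolding u_def by (simp add: norm_divide)
  have "ip (scaleC J u x) y = complex_of_real (cmod (ip x y))"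
    unfolding ip_scaleC_left u_def using False
    by (simp add: complex_norm_square[symmetric] field_simps power2_eq_square)
  then have "cmod (ip x y) = Re (ip (scaleC J u x) y)" by simp
  also have "\<dots> \<le> norm (scaleC J u x) * norm y" by (rule Re_ip_le)
  finally show ?thesis unfolding norm_scaleC \<open>cmod u = 1\<close> by simp
qed

lemma bounded_bilinear_ip: "bounded_bilinear ip"
proof
  show "\<exists>K. \<forall>a b. norm (ip a b) \<le> norm a * norm b * K"
    using norm_ip_le by (intro exI[of _ 1]) simp
qed (simp_all add: ip_add_left ip_add_right ip_scaleR_left ip_scaleR_right scaleR_conv_of_real)

lemma bounded_linear_scaleC: "bounded_linear (scaleC J a)"
proof -
  have "bounded_linear J"
    using linear_J norm_J by (intro bounded_linear_intro[of _ 1]) (simp_all add: linear_add linear_scale)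
  then show ?thesis
    unfolding scaleC_def[abs_def]
    by (intro bounded_linear_add bounded_linear_scaleR_right bounded_linear_ident
        bounded_linear_compose[OF bounded_linear_scaleR_right])
qed

lemma scaleC_J: "scaleC J a (J x) = J (scaleC J a x)"
  unfolding scaleC_def using linear_J by (simp add: linear_add linear_scale)

lemma eq_0_if_orthogonal_dense:
  assumes "closure D = UNIV" and "\<And>x. x \<in> D \<Longrightarrow> ip x v = 0"
  shows "v = 0"
proof -
  have "v \<in> closure D" using assms(1) by simp
  then obtain f where f: "\<And>n. f n \<in> D" "f \<longlonglongrightarrow> v"
    unfolding closure_sequential by blast
  have "(\<lambda>n. ip (f n) v) \<longlonglongrightarrow> ip v v"
    using bounded_bilinear.tendsto[OF bounded_bilinear_ip f(2) tendsto_const] .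
  moreover have "(\<lambda>n. ip (f n) v) = (\<lambda>n. 0)" using f(1) assms(2) by simp
  ultimately have "ip v v = 0" using LIMSEQ_unique tendsto_const by metis
  then show ?thesis by (simp add: ip_self)
qed

lemma selfadjoint_closed:
  assumes A: "selfadjoint J ip D A" and f: "\<And>n. f n \<in> D" "f \<longlonglongrightarrow> x"
    and Af: "(\<lambda>n. A (f n)) \<longlonglongrightarrow> w"
  shows "x \<in> D \<and> A x = w"
proof -
  have A_symmetric: "\<And>u v. u \<in> D \<Longrightarrow> v \<in> D \<Longrightarrow> ip (A u) v = ip u (A v)"
    and adjoint_domain: "\<And>v. v \<in> D \<longleftrightarrow> (\<exists>z. \<forall>u\<in>D. ip (A u) v = ip u z)"
    and "closure D = UNIV"
    using A unfolding selfadjoint_def by blast+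
  have A_limit: "ip (A z) x = ip z w" if z: "z \<in> D" for z
  proof (rule LIMSEQ_unique)
    show "(\<lambda>n. ip (A z) (f n)) \<longlonglongrightarrow> ip (A z) x"
      by (rule bounded_bilinear.tendsto[OF bounded_bilinear_ip tendsto_const f(2)])
    have "(\<lambda>n. ip z (A (f n))) \<longlonglongrightarrow> ip z w"
      by (rule bounded_bilinear.tendsto[OF bounded_bilinear_ip tendsto_const Af])
    then show "(\<lambda>n. ip (A z) (f n)) \<longlonglongrightarrow> ip z w"
      using A_symmetric[OF z f(1)] by simp
  qed
  then have "x \<in> D" using adjoint_domain by blast
  have "ip z (A x - w) = 0" if "z \<in> D" for z
    using A_limit[OF that] A_symmetric[OF that \<open>x \<in> D\<close>] by (simp add: ip_diff_right)
  then have "A x - w = 0" by (rule eq_0_if_orthogonal_dense[OF \<open>closure D = UNIV\<close>])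
  then show ?thesis using \<open>x \<in> D\<close> by simp
qed

lemma parallelogram_law:
  fixes x y :: 'a
  shows "(norm (x + y))\<^sup>2 + (norm (x - y))\<^sup>2 = 2 * (norm x)\<^sup>2 + 2 * (norm y)\<^sup>2"
  unfolding norm_add_square norm_diff_square by simp

lemma minimizing_sequence_Cauchy:
  fixes M :: "'a set"
  assumes M: "convex M" and f: "\<And>n. f n \<in> M"
    and \<delta>_le: "\<And>z. z \<in> M \<Longrightarrow> \<delta> \<le> norm (y - z)" and \<delta>_nonneg: "\<delta> \<ge> 0"
    and f_close: "\<And>n. (norm (y - f n))\<^sup>2 < \<delta>\<^sup>2 + 1 / Suc n"
  shows "Cauchy f"
proof (rule Cauchy_if_dist_le)
  fix m n
  have "(1/2) *\<^sub>R (f m + f n) \<in> M"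
    using convexD[OF M f f, of "1/2" "1/2"] by (simp add: scaleR_right_distrib)
  then have "2 * \<delta> \<le> norm (2 *\<^sub>R (y - (1/2) *\<^sub>R (f m + f n)))"
    using \<delta>_le by simp
  also have "2 *\<^sub>R (y - (1/2) *\<^sub>R (f m + f n)) = (y - f m) + (y - f n)"
    by (simp add: algebra_simps scaleR_2)
  finally have "4 * \<delta>\<^sup>2 \<le> (norm ((y - f m) + (y - f n)))\<^sup>2"
    using \<delta>_nonneg power_mono[of "2 * \<delta>" _ 2] by (simp add: power_mult_distrib)
  moreover have "(y - f m) - (y - f n) = f n - f m" by simp
  ultimately have "(norm (f m - f n))\<^sup>2 \<le> 2 / Suc m + 2 / Suc n"
    using parallelogram_law[of "y - f m" "y - f n"] f_close[of m] f_close[of n]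
    by (simp add: norm_minus_commute)
  then have "dist (f m) (f n) \<le> sqrt (2 / Suc m + 2 / Suc n)"
    by (simp add: dist_norm real_le_rsqrt)
  also have "\<dots> \<le> sqrt (2 / Suc m) + sqrt (2 / Suc n)" by (rule sqrt_add_le_add_sqrt) simp_all
  finally show "dist (f m) (f n) \<le> sqrt (2 / Suc m) + sqrt (2 / Suc n)" .
next
  show "(\<lambda>n. sqrt (2 / Suc n)) \<longlonglongrightarrow> 0"
    using tendsto_real_sqrt[OF tendsto_mult_left_zero[OF LIMSEQ_inverse_real_of_nat, of 2]]
    by (simp add: divide_inverse_commute)
qed

lemma nearest_point_exists:
  fixes M :: "'a set"
  assumes M: "convex M" "closed M" "M \<noteq> {}"
  shows "\<exists>x\<in>M. \<forall>z\<in>M. norm (y - x) \<le> norm (y - z)"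
proof -
  define \<delta> where "\<delta> = (INF z\<in>M. norm (y - z))"
  have bdd: "bdd_below ((\<lambda>z. norm (y - z)) ` M)" by (auto intro: bdd_belowI[of _ 0])
  have \<delta>_le: "\<delta> \<le> norm (y - z)" if "z \<in> M" for z
    unfolding \<delta>_def using bdd that by (rule cINF_lower)
  have \<delta>_nonneg: "\<delta> \<ge> 0" unfolding \<delta>_def using M(3) by (intro cINF_greatest) auto
  have "\<exists>z\<in>M. (norm (y - z))\<^sup>2 < \<delta>\<^sup>2 + 1 / Suc n" for n
  proof -
    have "\<delta> < sqrt (\<delta>\<^sup>2 + 1 / Suc n)" by (intro real_less_rsqrt) simp
    then obtain z where "z \<in> M" "norm (y - z) < sqrt (\<delta>\<^sup>2 + 1 / Suc n)"
      unfolding \<delta>_def using cINF_less_iff[OF M(3) bdd] by blast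
    moreover have "(norm (y - z))\<^sup>2 < (sqrt (\<delta>\<^sup>2 + 1 / Suc n))\<^sup>2"
      using calculation(2) by (intro power_strict_mono) auto
    ultimately show ?thesis by (intro bexI[of _ z]) simp_all
  qed
  then obtain f where f: "\<And>n. f n \<in> M" "\<And>n. (norm (y - f n))\<^sup>2 < \<delta>\<^sup>2 + 1 / Suc n"
    by metis
  obtain x where x: "f \<longlonglongrightarrow> x"
    using minimizing_sequence_Cauchy[OF M(1) f(1) \<delta>_le \<delta>_nonneg f(2)]
      Cauchy_convergent_iff convergent_def by blast
  have "x \<in> M" using M(2) f(1) x unfolding closed_sequential_limits by blast
  moreover have "norm (y - x) \<le> norm (y - z)" if "z \<in> M" for z
  proof -
    have "(\<lambda>n. (norm (y - f n))\<^sup>2) \<longlonglongrightarrow> (norm (y - x))\<^sup>2" by (intro tendsto_intros x)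
    moreover have "(\<lambda>n. \<delta>\<^sup>2 + 1 / Suc n) \<longlonglongrightarrow> \<delta>\<^sup>2 + 0"
      using LIMSEQ_inverse_real_of_nat by (intro tendsto_intros) (simp add: inverse_eq_divide)
    ultimately have "(norm (y - x))\<^sup>2 \<le> \<delta>\<^sup>2"
      using f(2) by (intro LIMSEQ_le) (auto intro: less_imp_le)
    then have "norm (y - x) \<le> \<delta>" using \<delta>_nonneg by (simp add: power2_le_iff_abs_le)
    then show ?thesis using \<delta>_le[OF that] by simp
  qed
  ultimately show ?thesis by blast
qed

lemma nearest_point_orthogonal:
  assumes M: "subspace M" and x: "x \<in> M" and nearest: "\<forall>z\<in>M. norm (y - x) \<le> norm (y - z)"
    and m: "m \<in> M"
  shows "Re (ip (y - x) m) = 0"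
proof (rule eq_0_if_le_quadratic[of "(norm m)\<^sup>2"])
  fix t :: real
  have "x + t *\<^sub>R m \<in> M" using M x m by (simp add: subspace_add subspace_scale)
  then have "norm (y - x) \<le> norm ((y - x) - t *\<^sub>R m)" using nearest by (simp add: algebra_simps)
  then have "(norm (y - x))\<^sup>2 \<le> (norm ((y - x) - t *\<^sub>R m))\<^sup>2" by (simp add: power_mono)
  then show "2 * t * Re (ip (y - x) m) \<le> t\<^sup>2 * (norm m)\<^sup>2"
    unfolding norm_diff_square[of "y - x"] ip_scaleR_right by (simp add: power_mult_distrib)
qed simp

text \<open>Along the segment from \<open>x\<close> to \<open>y\<close> the normalised quadratic form
  \<open>Re \<langle>A p, p\<rangle> / \<parallel>p\<parallel>\<^sup>2\<close> is continuous, so it takes every value in between; the segment avoids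
  \<open>0\<close> unless \<open>y = -x\<close>, and then both endpoints give the same value.\<close>
lemma Re_numrange_between:
  assumes D: "subspace D" and A: "clinear_on J D A"
    and x: "x \<in> D" "norm x = 1" and y: "y \<in> D" "norm y = 1"
    and t: "Re (ip (A x) x) \<le> t" "t \<le> Re (ip (A y) y)"
  shows "t \<in> Re ` numrange ip D A"
proof -
  define f where "f x = Re (ip (A x) x)" for x
  have A_add: "A (u + v) = A u + A v" and A_scale: "A (r *\<^sub>R u) = r *\<^sub>R A u"
    if "u \<in> D" "v \<in> D" for u v r
    using A that unfolding clinear_on_def by blast+
  have f_scale: "f (r *\<^sub>R u) = r\<^sup>2 * f u" if "u \<in> D" for r u
    unfolding f_def A_scale[OF that that] ip_scaleR_left ip_scaleR_right
    by (simp add: power2_eq_square)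
  have unit: "f u \<in> Re ` numrange ip D A" if "u \<in> D" "norm u = 1" for u
    using that unfolding f_def numrange_def by blast
  show ?thesis
  proof (cases "y = - x")
    case True
    then have "f y = f x" using f_scale[OF x(1), of "-1"] by simp
    then show ?thesis using t unit[OF x] unfolding f_def by simp
  next
    case False
    define p where "p s = (1 - s) *\<^sub>R x + s *\<^sub>R y" for s
    have pD: "p s \<in> D" for s unfolding p_def using D x y by (simp add: subspace_add subspace_scale)
    have p0: "p s \<noteq> 0" if "s \<in> {0..1}" for s
      using convex_combination_unit_vectors_nonzero[OF x(2) y(2) False] that unfolding p_def by simp
    define g where "g s = Re (ip ((1 - s) *\<^sub>R A x + s *\<^sub>R A y) (p s)) / (norm (p s))\<^sup>2" for s
    have Ap: "A (p s) = (1 - s) *\<^sub>R A x + s *\<^sub>R A y" for s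
      unfolding p_def using A_add A_scale D x y by (simp add: subspace_scale)
    have "continuous_on {0..1} g"
      unfolding g_def p_def using p0 unfolding p_def
      by (intro continuous_intros bounded_bilinear.continuous_on[OF bounded_bilinear_ip]) auto
    moreover have "g 0 = f x" "g 1 = f y" unfolding g_def p_def f_def using x y by simp_all
    ultimately obtain s where s: "s \<in> {0..1}" "g s = t" using IVT'[of g 0 t 1] t unfolding f_def by auto
    have "f ((1 / norm (p s)) *\<^sub>R p s) = g s"
      unfolding f_scale[OF pD] unfolding f_def g_def Ap by (simp add: power_divide)
    moreover have "(1 / norm (p s)) *\<^sub>R p s \<in> D" "norm ((1 / norm (p s)) *\<^sub>R p s) = 1"
      using D pD p0[OF s(1)] by (simp_all add: subspace_scale)
    ultimately show ?thesis using unit s(2) by metis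
  qed
qed

lemma is_interval_Re_numrange:
  assumes "subspace D" "clinear_on J D A"
  shows "is_interval (Re ` numrange ip D A)"
  unfolding is_interval_1 numrange_def
  using Re_numrange_between[OF assms] by (fastforce simp: numrange_def)

end

section \<open>Coercive perturbations of selfadjoint operators\<close>

locale selfadjoint_perturbation = hilbert J ip
  for J :: "'a::{real_normed_vector,complete_space} \<Rightarrow> 'a" and ip +
  fixes D :: "'a set" and A S S' :: "'a \<Rightarrow> 'a"
  assumes selfadjoint_A: "selfadjoint J ip D A"
    and bounded_linear_S: "bounded_linear S"
    and S_J: "S (J x) = J (S x)"
    and S_adjoint: "ip (S x) y = ip x (S' y)"
begin

definition T :: "'a \<Rightarrow> 'a" where "T x = A x - S x"

lemma subspace_D: "subspace D"
  and J_D: "x \<in> D \<Longrightarrow> J x \<in> D"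
  and clinear_on_A: "clinear_on J D A"
  and adjoint_domain: "y \<in> D \<longleftrightarrow> (\<exists>z. \<forall>x\<in>D. ip (A x) y = ip x z)"
  using selfadjoint_A unfolding selfadjoint_def csubspace_def by blast+

lemma T_add: "x \<in> D \<Longrightarrow> y \<in> D \<Longrightarrow> T (x + y) = T x + T y"
  and T_scaleR: "x \<in> D \<Longrightarrow> T (r *\<^sub>R x) = r *\<^sub>R T x"
  and T_J: "x \<in> D \<Longrightarrow> T (J x) = J (T x)"
  using clinear_on_A linear_J bounded_linear.linear[OF bounded_linear_S] S_J
  unfolding T_def clinear_on_def by (simp_all add: linear_add linear_scale linear_diff algebra_simps)

lemma T_diff: "x \<in> D \<Longrightarrow> y \<in> D \<Longrightarrow> T (x - y) = T x - T y"
  using T_add[of "x - y" y] subspace_diff[OF subspace_D] by (simp add: algebra_simps)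

lemma subspace_range_T: "subspace (T ` D)"
proof -
  have "T 0 = 0" using T_scaleR[of 0 0] subspace_0[OF subspace_D] by simp
  show ?thesis
  proof (rule subspaceI)
    show "0 \<in> T ` D" using \<open>T 0 = 0\<close> subspace_0[OF subspace_D] by (metis image_eqI)
  next
    fix x y assume "x \<in> T ` D" "y \<in> T ` D"
    then obtain u v where "u \<in> D" "v \<in> D" "x = T u" "y = T v" by blast
    then show "x + y \<in> T ` D" using T_add subspace_add[OF subspace_D] by (metis image_eqI)
  next
    fix c x assume "x \<in> T ` D"
    then obtain u where "u \<in> D" "x = T u" by blast
    then show "c *\<^sub>R x \<in> T ` D" using T_scaleR subspace_scale[OF subspace_D] by (metis image_eqI)
  qed
qed

lemma coercive_if_unit:
  assumes "e \<ge> 0" and unit: "\<And>u. u \<in> D \<Longrightarrow> norm u = 1 \<Longrightarrow> e \<le> cmod (ip (T u) u)"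
    and x: "x \<in> D"
  shows "e * (norm x)\<^sup>2 \<le> cmod (ip (T x) x)"
proof (cases "x = 0")
  case True
  then show ?thesis by simp
next
  case False
  define u where "u = (1 / norm x) *\<^sub>R x"
  have u: "u \<in> D" "norm u = 1" using False x subspace_D unfolding u_def by (simp_all add: subspace_scale)
  have "x = norm x *\<^sub>R u" using False unfolding u_def by simp
  then have "ip (T x) x = complex_of_real ((norm x)\<^sup>2) * ip (T u) u"
    by (metis T_scaleR[OF u(1)] ip_scaleR_left ip_scaleR_right mult.assoc of_real_mult power2_eq_square)
  then have "cmod (ip (T x) x) = (norm x)\<^sup>2 * cmod (ip (T u) u)" by (simp add: norm_mult norm_power)
  moreover have "e * (norm x)\<^sup>2 \<le> cmod (ip (T u) u) * (norm x)\<^sup>2"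
    using unit[OF u] by (rule mult_right_mono) simp
  ultimately show ?thesis by (simp add: mult.commute)
qed

context
  fixes e :: real
  assumes e_pos: "e > 0" and coercive: "\<And>x. x \<in> D \<Longrightarrow> e * (norm x)\<^sup>2 \<le> cmod (ip (T x) x)"
begin

lemma norm_T_lower:
  assumes "x \<in> D"
  shows "e * norm x \<le> norm (T x)"
proof -
  have "(e * norm x) * norm x \<le> norm (T x) * norm x"
    using coercive[OF assms] norm_ip_le[of "T x" x] by (simp add: power2_eq_square mult.assoc)
  then show ?thesis by (cases "x = 0") (simp_all add: mult_le_cancel_right_pos)
qed

lemma inj_on_T: "inj_on T D"
proof (rule inj_onI)
  fix x y assume "x \<in> D" "y \<in> D" "T x = T y"
  then have "e * norm (x - y) \<le> 0"
    using norm_T_lower[of "x - y"] T_diff subspace_diff[OF subspace_D] by simp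
  then show "x = y" using e_pos by (simp add: mult_le_0_iff)
qed

lemma closed_range_T: "closed (T ` D)"
  unfolding closed_sequential_limits
proof (intro allI impI, elim conjE)
  fix g y assume g: "\<forall>n. g n \<in> T ` D" and lim: "g \<longlonglongrightarrow> y"
  then have "\<forall>n. \<exists>x\<in>D. g n = T x" by blast
  then obtain f where f: "\<And>n. f n \<in> D" "\<And>n. g n = T (f n)" by metis
  have dist_f: "dist (f m) (f n) \<le> dist (g m) (g n) / e" for m n
    using norm_T_lower[OF subspace_diff[OF subspace_D f(1) f(1)]] e_pos
    by (simp add: dist_norm T_diff f pos_le_divide_eq mult.commute)
  have "Cauchy f"
  proof (rule metric_CauchyI)
    fix r :: real assume "r > 0"
    then obtain M where M: "\<And>m n. m \<ge> M \<Longrightarrow> n \<ge> M \<Longrightarrow> dist (g m) (g n) < e * r"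
      using metric_CauchyD[OF LIMSEQ_imp_Cauchy[OF lim], of "e * r"] e_pos by auto
    show "\<exists>M. \<forall>m\<ge>M. \<forall>n\<ge>M. dist (f m) (f n) < r"
    proof (intro exI allI impI)
      fix m n assume "m \<ge> M" "n \<ge> M"
      then have "dist (g m) (g n) / e < r" using M e_pos by (simp add: pos_divide_less_eq mult.commute)
      then show "dist (f m) (f n) < r" using dist_f[of m n] by linarith
    qed
  qed
  then obtain x where x: "f \<longlonglongrightarrow> x" using Cauchy_convergent_iff convergent_def by blast
  have "(\<lambda>n. g n + S (f n)) \<longlonglongrightarrow> y + S x"
    by (intro tendsto_add lim bounded_linear.tendsto[OF bounded_linear_S x])
  moreover have "g n + S (f n) = A (f n)" for n using f(2) by (simp add: T_def)
  ultimately have "x \<in> D \<and> A x = y + S x"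
    using selfadjoint_closed[OF selfadjoint_A f(1) x] by simp
  then show "y \<in> T ` D" unfolding T_def by force
qed

lemma eq_0_if_orthogonal_range_T:
  assumes "\<And>x. x \<in> D \<Longrightarrow> ip (T x) v = 0"
  shows "v = 0"
proof -
  have "ip (A x) v = ip x (S' v)" if "x \<in> D" for x
    using assms[OF that] unfolding T_def ip_diff_left S_adjoint by simp
  then have "v \<in> D" using adjoint_domain by blast
  then have "e * (norm v)\<^sup>2 \<le> 0" using coercive[of v] assms[of v] by simp
  then show ?thesis using e_pos by (simp add: mult_le_0_iff)
qed

text \<open>The residual \<open>y - x\<close> of the nearest point \<open>x\<close> of the closed range is orthogonal to the range
  (its imaginary part too, via \<open>T (J u) = J (T u)\<close>), so it vanishes by coercivity.\<close>
lemma surj_T: "T ` D = UNIV"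
proof -
  have "y \<in> T ` D" for y
  proof -
    have "T ` D \<noteq> {}" using subspace_0[OF subspace_range_T] by blast
    then obtain x where x: "x \<in> T ` D" and nearest: "\<forall>z\<in>T ` D. norm (y - x) \<le> norm (y - z)"
      using nearest_point_exists[OF subspace_imp_convex[OF subspace_range_T] closed_range_T] by blast
    have Re0: "Re (ip (y - x) (T u)) = 0" if "u \<in> D" for u
      by (rule nearest_point_orthogonal[OF subspace_range_T x nearest imageI[OF that]])
    have "ip (T u) (y - x) = 0" if u: "u \<in> D" for u
    proof -
      have "Im (ip (y - x) (T u)) = 0"
        using Re0[OF J_D[OF u]] unfolding T_J[OF u] ip_J_right by simp
      then have "ip (y - x) (T u) = 0" using Re0[OF u] by (simp add: complex_eq_iff)
      then show ?thesis using ip_commute_cnj[of "T u" "y - x"] by simp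
    qed
    then have "y = x" using eq_0_if_orthogonal_range_T[of "y - x"] by simp
    then show ?thesis using x by simp
  qed
  then show ?thesis by blast
qed

theorem bij_betw_T_inverse_bound:
  "bij_betw T D UNIV \<and> (\<forall>y. norm (the_inv_into D T y) \<le> norm y / e)"
proof -
  have "e * norm (the_inv_into D T y) \<le> norm y" for y
    using norm_T_lower[OF the_inv_into_into[OF inj_on_T, of y]] f_the_inv_into_f[OF inj_on_T, of y]
      surj_T by simp
  then show ?thesis
    using inj_on_T surj_T e_pos unfolding bij_betw_def by (simp add: pos_le_divide_eq mult.commute)
qed

end

end

section \<open>The operator function \<open>T(\<omega>)\<close>\<close>

context hilbert
begin

lemma selfadjoint_perturbation_scaleC:
  assumes A: "selfadjoint J ip D A" and B: "bounded_selfadjoint J ip B"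
  shows "selfadjoint_perturbation J ip D A (\<lambda>x. scaleC J lam x + scaleC J kap (B x))
           (\<lambda>y. scaleC J (cnj lam) y + scaleC J (cnj kap) (B y))"
proof -
  have B_lin: "bounded_linear B" and "B (J x) = J (B x)" and "ip (B x) y = ip x (B y)" for x y
    using B unfolding bounded_selfadjoint_def by blast+
  moreover have "bounded_linear (\<lambda>x. scaleC J lam x + scaleC J kap (B x))"
    by (intro bounded_linear_add bounded_linear_scaleC bounded_linear_compose[OF bounded_linear_scaleC B_lin])
  ultimately show ?thesis
    using hilbert_axioms A linear_J
    by (intro selfadjoint_perturbation.intro selfadjoint_perturbation_axioms.intro)
      (simp_all add: scaleC_J ip_add_left ip_add_right ip_scaleC_left ip_scaleC_right linear_add)
qed

lemma ip_Top_unit: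
  assumes A: "selfadjoint J ip D A" and B: "bounded_selfadjoint J ip B"
    and u: "u \<in> D" "norm u = 1"
  shows "ip (Top J c d A B \<omega> u) u
         = of_real (Re (ip (A u) u)) - \<omega>\<^sup>2 - kappa c d \<omega> * of_real (Re (ip (B u) u))"
proof -
  have "ip (A u) u = of_real (Re (ip (A u) u))"
    using A u(1) unfolding selfadjoint_def by (intro ip_self_real_if_symmetric) blast
  moreover have "ip (B u) u = of_real (Re (ip (B u) u))"
    using B unfolding bounded_selfadjoint_def by (intro ip_self_real_if_symmetric) blast
  moreover have "ip u u = 1" using u(2) by (simp add: ip_self)
  ultimately show ?thesis
    unfolding Top_def ip_diff_left ip_scaleC_left by simp
qed

lemma Re_numranges_nonempty_interval:
  assumes A: "selfadjoint J ip D A" and B: "bounded_selfadjoint J ip B" and B0: "B \<noteq> (\<lambda>x. 0)"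
  shows "Re ` numrange ip D A \<noteq> {}" "is_interval (Re ` numrange ip D A)"
    "Re ` numrange ip UNIV B \<noteq> {}"
proof -
  have D: "subspace D" "closure D = UNIV" "clinear_on J D A"
    using A unfolding selfadjoint_def csubspace_def by blast+
  have "B 0 = 0" using B unfolding bounded_selfadjoint_def by (simp add: linear_simps)
  then have nontrivial: "(UNIV :: 'a set) \<noteq> {0}" using B0 by auto
  then have "D \<noteq> {0}" using D(2) by auto
  then show "Re ` numrange ip D A \<noteq> {}" using numrange_nonempty[OF D(1)] by simp
  show "is_interval (Re ` numrange ip D A)" by (rule is_interval_Re_numrange[OF D(1,3)])
  show "Re ` numrange ip UNIV B \<noteq> {}" using numrange_nonempty[OF subspace_UNIV nontrivial] by simp
qed

end

lemma kappa_denominator_nonzero: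
  assumes "\<omega> \<noteq> delta_plus c d" "\<omega> \<noteq> delta_minus c d"
  shows "complex_of_real c - \<i> * complex_of_real d * \<omega> - \<omega>\<^sup>2 \<noteq> 0"
proof
  assume q: "complex_of_real c - \<i> * complex_of_real d * \<omega> - \<omega>\<^sup>2 = 0"
  define r where "r = csqrt (complex_of_real (c - d\<^sup>2 / 4))"
  have "(\<omega> + \<i> * complex_of_real (d / 2))\<^sup>2 = \<omega>\<^sup>2 + \<i> * complex_of_real d * \<omega> - complex_of_real (d\<^sup>2 / 4)"
    by (simp add: power2_eq_square algebra_simps)
  also have "\<dots> = r\<^sup>2" using q unfolding r_def by (simp add: algebra_simps)
  finally have "\<omega> + \<i> * complex_of_real (d / 2) = r \<or> \<omega> + \<i> * complex_of_real (d / 2) = - r"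
    by (simp add: power2_eq_iff)
  then show False using assms unfolding delta_plus_def delta_minus_def r_def[symmetric]
    by (auto simp: algebra_simps)
qed

lemma ppoly_eq_mult_residual:
  assumes "complex_of_real c - \<i> * complex_of_real d * \<omega> - \<omega>\<^sup>2 \<noteq> 0"
  shows "ppoly c d \<alpha> \<beta> \<omega> = (complex_of_real c - \<i> * complex_of_real d * \<omega> - \<omega>\<^sup>2)
           * (of_real \<alpha> - \<omega>\<^sup>2 - kappa c d \<omega> * of_real \<beta>)"
  using assms unfolding ppoly_def kappa_def by (simp add: field_simps)

lemma residual_nonzero_if_notin_W_Omega:
  assumes "\<omega> \<noteq> delta_plus c d" "\<omega> \<noteq> delta_minus c d" "\<omega> \<notin> W_Omega c d WA WB"
    and "\<alpha> \<in> closure WA" "\<beta> \<in> closure WB"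
  shows "of_real \<alpha> - \<omega>\<^sup>2 - kappa c d \<omega> * of_real \<beta> \<noteq> 0"
  using assms ppoly_eq_mult_residual[OF kappa_denominator_nonzero[OF assms(1,2)], of \<alpha> \<beta>]
  unfolding W_Omega_def by auto

theorem corollary4p6:
  fixes J :: "'a::{real_normed_vector,complete_space} \<Rightarrow> 'a"
    and ip :: "'a \<Rightarrow> 'a \<Rightarrow> complex"
    and D :: "'a set" and A B :: "'a \<Rightarrow> 'a"
    and c d :: real and \<omega> :: complex
  assumes H: "hilbert_space J ip"
    and A: "selfadjoint J ip D A"
    and B: "bounded_selfadjoint J ip B" and B0: "B \<noteq> (\<lambda>x. 0)"
    and c: "c \<ge> 0" and d: "d > 0"
    and \<omega>C: "\<omega> \<noteq> delta_plus c d" "\<omega> \<noteq> delta_minus c d"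
    and \<omega>W: "\<omega> \<notin> W_Omega c d (Re ` numrange ip D A) (Re ` numrange ip UNIV B)"
  shows "bij_betw (Top J c d A B \<omega>) D UNIV \<and>
         (\<forall>y. norm (the_inv_into D (Top J c d A B \<omega>) y)
               \<le> norm y / eps0 c d (Re ` numrange ip D A) (Re ` numrange ip UNIV B) \<omega>)"
proof -
  interpret hilbert J ip by (rule hilbert.intro[OF H])
  interpret P: selfadjoint_perturbation J ip D A
    "\<lambda>x. scaleC J (\<omega>\<^sup>2) x + scaleC J (kappa c d \<omega>) (B x)"
    "\<lambda>y. scaleC J (cnj (\<omega>\<^sup>2)) y + scaleC J (cnj (kappa c d \<omega>)) (B y)"
    by (rule selfadjoint_perturbation_scaleC[OF A B])
  define WA WB where "WA = Re ` numrange ip D A" and "WB = Re ` numrange ip UNIV B"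
  define e where "e = eps0 c d WA WB \<omega>"
  have Top: "Top J c d A B \<omega> = P.T" by (simp add: fun_eq_iff Top_def P.T_def)
  have WA: "WA \<noteq> {}" "is_interval WA" and WB: "WB \<noteq> {}"
    using Re_numranges_nonempty_interval[OF A B B0] unfolding WA_def WB_def by auto
  have "e > 0"
    unfolding e_def eps0_eq_eps_bound
    using eps_bound_pos[OF WA WB] residual_nonzero_if_notin_W_Omega[OF \<omega>C \<omega>W[folded WA_def WB_def]]
    by blast
  moreover have "e \<le> cmod (ip (P.T u) u)" if "u \<in> D" "norm u = 1" for u
    using eps_bound_le[of "Re (ip (A u) u)" WA "Re (ip (B u) u)" WB]
      ip_Top_unit[OF A B that, of c d \<omega>] that
    unfolding e_def eps0_eq_eps_bound Top WA_def WB_def numrange_def by auto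
  ultimately have "e * (norm x)\<^sup>2 \<le> cmod (ip (P.T x) x)" if "x \<in> D" for x
    using P.coercive_if_unit that by simp
  then show ?thesis
    using P.bij_betw_T_inverse_bound[OF \<open>e > 0\<close>] unfolding Top e_def WA_def WB_def by blast
qed

end
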